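(* Let $\mathcal{D}$ be a distribution on $\mathbb{R}^d\times\mathbb{R}$, let $\mathbb{W}$ be a parameter space, and let $\ell:(\mathbb{R}^d\times\mathbb{R})\times\mathbb{W}\to\mathbb{R}^+$ be a loss function with $L:=\sup_{z}\sup_{w\in\mathbb{W}}|\ell(z,w)|<\infty$. For a training set $S=\{z_1,\dots,z_n\}$ drawn i.i.d. from $\mathcal{D}$, let $\phi_S$ be the (stochastic) gradient descent update $w_{t+1}=\phi_S(w_t)=w_t-\frac{\eta}{m}\sum_{i\in\Xi_t}\nabla\ell(z_i,w_t)$, where the step size $\eta>0$ is fixed and $\Xi_t$ is a uniformly random subset of $\{1,\dots,n\}$ of size $m$ ($m=n$ for gradient descent, in which case $\Xi_t=\{1,\dots,n\}$). Assume the ergodicity assumption: for every $S$ there is a map $z\mapsto\langle\ell_z\rangle_S\in\mathbb{R}$ such that for Lebesgue-a.e. $w_0$ and every $z\in\mathbb{R}^d\times\mathbb{R}$, $\lim_{T\to\infty}\frac1T\sum_{t=0}^{T-1}\ell(z,w_t)=\langle\ell_z\rangle_S$ along the orbit $w_t=\phi_S(w_{t-1})$. Suppose the algorithm is $\beta$-statistically algorithmically stable, i.e. $\beta=\sup\{|\langle\ell_z\rangle_S-\langle\ell_z\rangle_{S'}|: z\in\mathbb{R}^d\times\mathbb{R}\}$ for all training sets $S,S'$ sampled from $\mathcal{D}$ that differ in exactly one point. Define $\hat R_S=\frac1n\sum_{z\in S}\langle\ell_z\rangle_S$ and $R_S=\mathbb{E}_{z\sim\mathcal{D}}\langle\ell_z\rangle_S$.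 Then for any $\delta\in(0,1)$, with probability greater than $1-\delta$ over $S\sim\mathcal{D}^n$, $$R_S\le \hat R_S+\beta+2(n\beta+L)\sqrt{\frac{\log(2/\delta)}{2n}}.$$
   Context: $\langle\ell_z\rangle_S$ is the long-time average ("loss statistic") of the loss at the point $z$ along almost every training orbit for training set $S$. $\hat R_S$ and $R_S$ are the empirical and population risks defined via these loss statistics. Statistical algorithmic stability (SAS) with coefficient $\beta$ is as defined in the claim; the two training sets $S,S'$ differ by replacing one element with another drawn from $\mathcal{D}$. *)

theory Defs
  imports "HOL-Probability.Probability"
begin

text \<open>Training set S is indexed by 0..n-1,
  xi t is the mini-batch index set used at step t, g is the gradient of the loss
  in the parameter, eta the step size and m the batch size.\<close>
fun sgd_orbit :: "('z \<Rightarrow> 'w::real_vector \<Rightarrow> 'w) \<Rightarrow> real \<Rightarrow> nat \<Rightarrow> (nat \<Rightarrow> 'z)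
                   \<Rightarrow> (nat \<Rightarrow> nat set) \<Rightarrow> 'w \<Rightarrow> nat \<Rightarrow> 'w" where
  "sgd_orbit g eta m S xi w0 0 = w0"
| "sgd_orbit g eta m S xi w0 (Suc t) =
     (let w = sgd_orbit g eta m S xi w0 t in
        w - (eta / real m) *\<^sub>R (\<Sum>i\<in>xi t. g (S i) w))"

text \<open>Law of the sequence of mini-batches: i.i.d. uniformly random subsets of
  {0..n-1} of size m (for m = n this is the constant full batch).\<close>
definition batch_law :: "nat \<Rightarrow> nat \<Rightarrow> (nat \<Rightarrow> nat set) measure" where
  "batch_law n m = PiM UNIV (\<lambda>_. measure_pmf (pmf_of_set {A. A \<subseteq> {..<n} \<and> card A = m}))"

definition sample_law :: "nat \<Rightarrow> 'z measure \<Rightarrow> (nat \<Rightarrow> 'z) measure" where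
  "sample_law n D = PiM {..<n} (\<lambda>_. D)"

definition differ_in_one :: "nat \<Rightarrow> (nat \<Rightarrow> 'z) \<Rightarrow> (nat \<Rightarrow> 'z) \<Rightarrow> bool" where
  "differ_in_one n S S' \<longleftrightarrow> card {i\<in>{..<n}. S i \<noteq> S' i} = 1"

definition emp_risk :: "nat \<Rightarrow> ((nat \<Rightarrow> 'z) \<Rightarrow> 'z \<Rightarrow> real) \<Rightarrow> (nat \<Rightarrow> 'z) \<Rightarrow> real" where
  "emp_risk n lstat S = (1 / real n) * (\<Sum>i<n. lstat S (S i))"

definition pop_risk :: "'z measure \<Rightarrow> ((nat \<Rightarrow> 'z) \<Rightarrow> 'z \<Rightarrow> real) \<Rightarrow> (nat \<Rightarrow> 'z) \<Rightarrow> real" where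
  "pop_risk D lstat S = (\<integral>z. lstat S z \<partial>D)"

end

theory Submission
  imports Defs
begin

(* Let Phi(S) = R_S - hat R_S be the generalization gap. Replacing one sample point moves every
   loss statistic by at most beta and the replaced summand of hat R_S by at most L, so Phi has
   bounded differences 2 beta + L / n. Its mean is at most beta: resampling the i-th point leaves
   the law of S unchanged and moves the loss statistics by at most beta, so
   E R_S <= E <l_(S i)>_S + beta. McDiarmid's inequality, obtained from Hoeffding's lemma by
   integrating out one coordinate at a time, bounds the probability that Phi exceeds
   beta + epsilon by delta / 2. The gradient dynamics enter only through ergodicity: as limits of
   running means of losses, all loss statistics lie in [0, L]. *)

lemma AE_imp_ex:
  assumes "AE x in M. P x" and "emeasure M (space M) \<noteq> 0"
  shows "\<exists>x. P x"
  using eventually_happens[OF assms(1)] assms(2) by (simp add: ae_filter_eq_bot_iff)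

lemma running_mean_limit_bounds:
  fixes f :: "nat \<Rightarrow> real"
  assumes lim: "(\<lambda>T. (\<Sum>t<T. f t) / real T) \<longlonglongrightarrow> c"
    and nonneg: "\<And>t. 0 \<le> f t" and le: "\<And>t. f t \<le> L"
  shows "0 \<le> c \<and> c \<le> L"
proof -
  have "0 \<le> (\<Sum>t<T. f t) / real T \<and> (\<Sum>t<T. f t) / real T \<le> L" if "T > 0" for T
  proof -
    have "(\<Sum>t<T. f t) \<le> real T * L"
      using sum_bounded_above[of "{..<T}" f L] le by simp
    then show ?thesis
      using that by (auto simp: sum_nonneg nonneg divide_simps mult.commute)
  qed
  then have "eventually (\<lambda>T. 0 \<le> (\<Sum>t<T. f t) / real T) sequentially"
      and "eventually (\<lambda>T. (\<Sum>t<T. f t) / real T \<le> L) sequentially"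
    by (auto intro: eventually_sequentiallyI[of 1])
  then show ?thesis
    using tendsto_lowerbound[OF lim] tendsto_upperbound[OF lim] by simp
qed

lemma ergodic_average_limit_bounds:
  fixes loss :: "'z \<Rightarrow> 'w \<Rightarrow> real" and orbit :: "'v \<Rightarrow> 'x \<Rightarrow> nat \<Rightarrow> 'w"
  assumes ergodic: "AE v in M. AE x in N. \<forall>z.
      (\<lambda>T. (\<Sum>t<T. loss z (orbit v x t)) / real T) \<longlonglongrightarrow> lstat z"
    and M: "emeasure M (space M) \<noteq> 0" and N: "emeasure N (space N) \<noteq> 0"
    and nonneg: "\<And>z w. 0 \<le> loss z w" and le: "\<And>z w. loss z w \<le> L"
  shows "0 \<le> lstat z \<and> lstat z \<le> L"
proof -
  obtain v x where "\<forall>z. (\<lambda>T. (\<Sum>t<T. loss z (orbit v x t)) / real T) \<longlonglongrightarrow> lstat z"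
    using AE_imp_ex[OF ergodic M] AE_imp_ex[OF _ N] by blast
  then have "(\<lambda>T. (\<Sum>t<T. loss z (orbit v x t)) / real T) \<longlonglongrightarrow> lstat z"
    by blast
  then show ?thesis
    by (rule running_mean_limit_bounds) (use nonneg le in auto)
qed

lemma (in prob_space) abs_integral_le_const:
  fixes f :: "'a \<Rightarrow> real"
  assumes f: "f \<in> borel_measurable M" and bound: "\<And>x. x \<in> space M \<Longrightarrow> \<bar>f x\<bar> \<le> B"
  shows "\<bar>\<integral>x. f x \<partial>M\<bar> \<le> B"
proof -
  have "integrable M f"
    using bound by (intro integrable_const_bound[where B=B] f) auto
  moreover have "AE x in M. f x \<le> B" "AE x in M. -B \<le> f x"
    using bound by (auto intro!: AE_I2 simp: abs_le_iff minus_le_iff)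
  ultimately show ?thesis
    using integral_le_const integral_ge_const by (simp add: abs_le_iff minus_le_iff)
qed

lemma (in prob_space) Hoeffdings_lemma_bounded_oscillation:
  fixes h :: "'a \<Rightarrow> real"
  assumes h: "h \<in> borel_measurable M" and l: "l > 0"
    and osc: "\<And>x y. x \<in> space M \<Longrightarrow> y \<in> space M \<Longrightarrow> h x - h y \<le> c"
  shows "(\<integral>\<^sup>+x. ennreal (exp (l * (h x - expectation h))) \<partial>M) \<le> ennreal (exp (l\<^sup>2 * c\<^sup>2 / 8))"
proof -
  define a where "a = (INF y\<in>space M. h y)"
  obtain y0 where y0: "y0 \<in> space M" using not_empty by blast
  have below: "h x - c \<le> h y" if "x \<in> space M" "y \<in> space M" for x y
    using osc[OF that] by simp
  then have "bdd_below (h ` space M)"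
    using y0 by (intro bdd_belowI2[where m="h y0 - c"])
  with below have "a \<le> h x \<and> h x - c \<le> a" if "x \<in> space M" for x
    using that y0 unfolding a_def by (auto intro!: cINF_lower cINF_greatest)
  then interpret interval_bounded_random_variable M h a "a + c"
    by unfold_locales (auto intro: h simp: algebra_simps)
  show ?thesis
    using Hoeffdings_lemma_nn_integral[OF l] by simp
qed

lemma (in prob_space) integral_last_coordinate_differences:
  fixes f :: "('i \<Rightarrow> 'a) \<Rightarrow> real"
  assumes k: "k \<notin> I"
    and f: "f \<in> borel_measurable (PiM (insert k I) (\<lambda>_. M))"
    and bounded: "\<And>x. x \<in> space (PiM (insert k I) (\<lambda>_. M)) \<Longrightarrow> \<bar>f x\<bar> \<le> B"
    and differences: "\<And>x i y. x \<in> space (PiM (insert k I) (\<lambda>_. M)) \<Longrightarrow> i \<in> I \<Longrightarrow> y \<in> space M \<Longrightarrow>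
        \<bar>f x - f (x(i := y))\<bar> \<le> c"
    and x: "x \<in> space (PiM I (\<lambda>_. M))" and i: "i \<in> I" and y: "y \<in> space M"
  shows "\<bar>(\<integral>z. f (x(k := z)) \<partial>M) - (\<integral>z. f ((x(i := y))(k := z)) \<partial>M)\<bar> \<le> c"
proof -
  have x': "x(i := y) \<in> space (PiM I (\<lambda>_. M))"
    using x i y by (auto simp: space_PiM PiE_iff extensional_def)
  have upd_space: "u(k := z) \<in> space (PiM (insert k I) (\<lambda>_. M))"
    if "u \<in> space (PiM I (\<lambda>_. M))" "z \<in> space M" for u z
    using that by (auto simp: space_PiM PiE_iff extensional_def)
  have f_upd: "(\<lambda>z. f (u(k := z))) \<in> borel_measurable M" if "u \<in> space (PiM I (\<lambda>_. M))" for u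
    using measurable_comp[OF measurable_component_update f, OF that k] by (simp add: comp_def fun_upd_def)
  have twist: "(x(k := z))(i := y) = (x(i := y))(k := z)" for z
    using i k by (auto simp: fun_upd_twist)
  have "(\<integral>z. f (x(k := z)) \<partial>M) - (\<integral>z. f ((x(i := y))(k := z)) \<partial>M)
      = (\<integral>z. f (x(k := z)) - f ((x(k := z))(i := y)) \<partial>M)"
    unfolding twist using x x' bounded upd_space
    by (intro Bochner_Integration.integral_diff[symmetric] integrable_const_bound[where B=B] f_upd) auto
  also have "\<bar>\<dots>\<bar> \<le> c"
  proof (rule abs_integral_le_const)
    show "(\<lambda>z. f (x(k := z)) - f ((x(k := z))(i := y))) \<in> borel_measurable M"
      unfolding twist using f_upd[OF x] f_upd[OF x'] by measurable
  qed (use x y i upd_space in \<open>auto intro!: differences\<close>)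
  finally show ?thesis .
qed

lemma (in prob_space) nn_integral_exp_PiM_insert_le:
  fixes f :: "('i \<Rightarrow> 'a) \<Rightarrow> real"
  assumes I: "finite I" "k \<notin> I" and l: "l > 0"
    and f: "integrable (PiM (insert k I) (\<lambda>_. M)) f"
    and differences: "\<And>x y. x \<in> space (PiM (insert k I) (\<lambda>_. M)) \<Longrightarrow> y \<in> space M \<Longrightarrow>
        \<bar>f x - f (x(k := y))\<bar> \<le> c"
  defines "g \<equiv> \<lambda>x. \<integral>y. f (x(k := y)) \<partial>M"
  shows "(\<integral>\<^sup>+x. ennreal (exp (l * (f x - (\<integral>x. f x \<partial>PiM (insert k I) (\<lambda>_. M))))) \<partial>PiM (insert k I) (\<lambda>_. M))
      \<le> (\<integral>\<^sup>+x. ennreal (exp (l * (g x - (\<integral>x. g x \<partial>PiM I (\<lambda>_. M))))) \<partial>PiM I (\<lambda>_. M))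
          * ennreal (exp (l\<^sup>2 * c\<^sup>2 / 8))"
proof -
  interpret product_sigma_finite "\<lambda>_. M" by unfold_locales
  let ?P = "PiM I (\<lambda>_. M)" and ?Eg = "\<integral>x. g x \<partial>PiM I (\<lambda>_. M)"
  note f_meas[measurable] = borel_measurable_integrable[OF f]
  have f_upd: "(\<lambda>y. f (x(k := y))) \<in> borel_measurable M" if "x \<in> space ?P" for x
    using measurable_comp[OF measurable_component_update f_meas, OF that I(2)]
    by (simp add: comp_def fun_upd_def)
  have g[measurable]: "g \<in> borel_measurable ?P"
    unfolding g_def by measurable
  have osc: "f (x(k := y)) - f (x(k := y')) \<le> c" if "x \<in> space ?P" "y \<in> space M" "y' \<in> space M" for x y y'
  proof -
    have "x(k := y) \<in> space (PiM (insert k I) (\<lambda>_. M))"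
      using that by (auto simp: space_PiM PiE_iff extensional_def)
    from differences[OF this that(3)] show ?thesis
      by (simp add: abs_le_iff del: fun_upd_apply)
  qed
  have "(\<integral>\<^sup>+x. ennreal (exp (l * (f x - (\<integral>x. f x \<partial>PiM (insert k I) (\<lambda>_. M))))) \<partial>PiM (insert k I) (\<lambda>_. M))
      = (\<integral>\<^sup>+x. (\<integral>\<^sup>+y. ennreal (exp (l * (g x - ?Eg))) * ennreal (exp (l * (f (x(k := y)) - g x))) \<partial>M) \<partial>?P)"
    unfolding product_integral_insert[OF I f] g_def[symmetric]
    by (subst product_nn_integral_insert[OF I])
       (auto intro!: nn_integral_cong simp flip: ennreal_mult exp_add simp: algebra_simps)
  also have "\<dots> = (\<integral>\<^sup>+x. ennreal (exp (l * (g x - ?Eg))) * (\<integral>\<^sup>+y. ennreal (exp (l * (f (x(k := y)) - g x))) \<partial>M) \<partial>?P)"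
    using f_upd by (intro nn_integral_cong nn_integral_cmult) measurable
  also have "\<dots> \<le> (\<integral>\<^sup>+x. ennreal (exp (l * (g x - ?Eg))) * ennreal (exp (l\<^sup>2 * c\<^sup>2 / 8)) \<partial>?P)"
    using Hoeffdings_lemma_bounded_oscillation[OF f_upd l] osc
    by (intro nn_integral_mono mult_left_mono) (auto simp: g_def)
  also have "\<dots> = (\<integral>\<^sup>+x. ennreal (exp (l * (g x - ?Eg))) \<partial>?P) * ennreal (exp (l\<^sup>2 * c\<^sup>2 / 8))"
    by (intro nn_integral_multc) measurable
  finally show ?thesis .
qed

lemma (in prob_space) McDiarmid_mgf:
  fixes f :: "(nat \<Rightarrow> 'a) \<Rightarrow> real"
  assumes l: "l > 0"
    and f: "f \<in> borel_measurable (PiM {..<k} (\<lambda>_. M))"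
    and bounded: "\<And>x. x \<in> space (PiM {..<k} (\<lambda>_. M)) \<Longrightarrow> \<bar>f x\<bar> \<le> B"
    and differences: "\<And>x i y. x \<in> space (PiM {..<k} (\<lambda>_. M)) \<Longrightarrow> i < k \<Longrightarrow> y \<in> space M \<Longrightarrow>
        \<bar>f x - f (x(i := y))\<bar> \<le> c"
  shows "(\<integral>\<^sup>+x. ennreal (exp (l * (f x - (\<integral>x. f x \<partial>PiM {..<k} (\<lambda>_. M))))) \<partial>PiM {..<k} (\<lambda>_. M))
      \<le> ennreal (exp (l\<^sup>2 * real k * c\<^sup>2 / 8))"
  using f bounded differences
proof (induction k arbitrary: f)
  case 0
  then show ?case
    by (simp add: PiM_empty lebesgue_integral_count_space_finite nn_integral_count_space_finite)
next
  case (Suc k)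
  let ?P = "PiM {..<k} (\<lambda>_. M)"
  have insert_k: "{..<Suc k} = insert k {..<k}" by auto
  note f = Suc.prems(1)[unfolded insert_k] and bounded = Suc.prems(2)[unfolded insert_k]
  have differences: "\<bar>f x - f (x(i := y))\<bar> \<le> c"
    if "x \<in> space (PiM (insert k {..<k}) (\<lambda>_. M))" "i \<in> insert k {..<k}" "y \<in> space M" for x i y
    using that Suc.prems(3)[of x i y] unfolding insert_k by (auto simp del: fun_upd_apply)
  define g where "g x = (\<integral>y. f (x(k := y)) \<partial>M)" for x
  have "g \<in> borel_measurable ?P"
    unfolding g_def using f by measurable
  moreover have "\<bar>g x\<bar> \<le> B" if "x \<in> space ?P" for x
    unfolding g_def using that bounded measurable_comp[OF measurable_component_update f]
    by (intro abs_integral_le_const) (auto simp: comp_def fun_upd_def space_PiM PiE_iff extensional_def)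
  moreover have "\<bar>g x - g (x(i := y))\<bar> \<le> c" if "x \<in> space ?P" "i < k" "y \<in> space M" for x i y
    unfolding g_def using integral_last_coordinate_differences[OF _ f bounded differences] that
    by (simp del: fun_upd_apply)
  ultimately have IH: "(\<integral>\<^sup>+x. ennreal (exp (l * (g x - (\<integral>x. g x \<partial>?P)))) \<partial>?P)
      \<le> ennreal (exp (l\<^sup>2 * real k * c\<^sup>2 / 8))"
    by (rule Suc.IH)
  interpret P': prob_space "PiM (insert k {..<k}) (\<lambda>_. M)"
    by (intro prob_space_PiM prob_space_axioms)
  have "integrable (PiM (insert k {..<k}) (\<lambda>_. M)) f"
    using bounded by (intro P'.integrable_const_bound[where B=B] AE_I2 f) auto
  then have "(\<integral>\<^sup>+x. ennreal (exp (l * (f x - (\<integral>x. f x \<partial>PiM {..<Suc k} (\<lambda>_. M))))) \<partial>PiM {..<Suc k} (\<lambda>_. M))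
      \<le> (\<integral>\<^sup>+x. ennreal (exp (l * (g x - (\<integral>x. g x \<partial>?P)))) \<partial>?P) * ennreal (exp (l\<^sup>2 * c\<^sup>2 / 8))"
    unfolding insert_k g_def by (intro nn_integral_exp_PiM_insert_le l differences) auto
  also have "\<dots> \<le> ennreal (exp (l\<^sup>2 * real k * c\<^sup>2 / 8)) * ennreal (exp (l\<^sup>2 * c\<^sup>2 / 8))"
    by (intro mult_right_mono IH) auto
  also have "\<dots> = ennreal (exp (l\<^sup>2 * real (Suc k) * c\<^sup>2 / 8))"
    by (simp flip: ennreal_mult exp_add add: algebra_simps add_divide_distrib)
  finally show ?case .
qed

lemma (in prob_space) McDiarmid_inequality:
  fixes f :: "(nat \<Rightarrow> 'a) \<Rightarrow> real"
  assumes eps: "eps \<ge> 0"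
    and f: "f \<in> borel_measurable (PiM {..<k} (\<lambda>_. M))"
    and bounded: "\<And>x. x \<in> space (PiM {..<k} (\<lambda>_. M)) \<Longrightarrow> \<bar>f x\<bar> \<le> B"
    and differences: "\<And>x i y. x \<in> space (PiM {..<k} (\<lambda>_. M)) \<Longrightarrow> i < k \<Longrightarrow> y \<in> space M \<Longrightarrow>
        \<bar>f x - f (x(i := y))\<bar> \<le> c"
  shows "measure (PiM {..<k} (\<lambda>_. M))
           {x \<in> space (PiM {..<k} (\<lambda>_. M)). (\<integral>x. f x \<partial>PiM {..<k} (\<lambda>_. M)) + eps \<le> f x}
         \<le> exp (-2 * eps\<^sup>2 / (real k * c\<^sup>2))"
proof -
  let ?P = "PiM {..<k} (\<lambda>_. M)"
  interpret P: prob_space ?P by (intro prob_space_PiM prob_space_axioms)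
  define E where "E = (\<integral>x. f x \<partial>?P)"
  show ?thesis
  proof (cases "eps = 0 \<or> real k * c\<^sup>2 = 0")
    \<comment> \<open>with x / 0 = 0 the bound is then exp 0 = 1\<close>
    case True
    then have "-2 * eps\<^sup>2 / (real k * c\<^sup>2) = 0"
      by auto
    then show ?thesis
      using P.prob_le_1 by (simp only: exp_zero)
  next
    case False
    define l where "l = 4 * eps / (real k * c\<^sup>2)"
    have l: "l > 0"
      unfolding l_def using eps False by (auto intro!: divide_pos_pos)
    have "emeasure ?P {x \<in> space ?P. eps \<le> f x - E}
        \<le> ennreal (exp (-l * eps)) * (\<integral>\<^sup>+x. ennreal (exp (l * (f x - E))) * indicator (space ?P) x \<partial>?P)"
      using f by (intro Chernoff_ineq_nn_integral_ge l) auto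
    also have "(\<integral>\<^sup>+x. ennreal (exp (l * (f x - E))) * indicator (space ?P) x \<partial>?P)
        = (\<integral>\<^sup>+x. ennreal (exp (l * (f x - E))) \<partial>?P)"
      by (intro nn_integral_cong) auto
    also have "\<dots> \<le> ennreal (exp (l\<^sup>2 * real k * c\<^sup>2 / 8))"
      unfolding E_def by (rule McDiarmid_mgf[OF l f bounded differences])
    also have "ennreal (exp (-l * eps)) * ennreal (exp (l\<^sup>2 * real k * c\<^sup>2 / 8))
        = ennreal (exp (-2 * eps\<^sup>2 / (real k * c\<^sup>2)))"
      using False unfolding l_def
      by (simp flip: ennreal_mult exp_add add: field_simps power2_eq_square)
    finally have "emeasure ?P {x \<in> space ?P. eps \<le> f x - E} \<le> exp (-2 * eps\<^sup>2 / (real k * c\<^sup>2))"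
      by (simp add: mult_left_mono)
    moreover have "{x \<in> space ?P. E + eps \<le> f x} = {x \<in> space ?P. eps \<le> f x - E}"
      by auto
    ultimately show ?thesis
      unfolding E_def by (simp add: P.emeasure_eq_measure)
  qed
qed

lemma (in prob_space) integral_PiM_resample:
  fixes g :: "('i \<Rightarrow> 'a) \<Rightarrow> real"
  assumes I: "finite I" "i \<in> I" and g: "integrable (PiM I (\<lambda>_. M)) g"
  shows "(\<integral>S. (\<integral>z. g (S(i := z)) \<partial>M) \<partial>PiM I (\<lambda>_. M)) = (\<integral>S. g S \<partial>PiM I (\<lambda>_. M))"
proof -
  interpret product_prob_space "\<lambda>_. M" I by unfold_locales
  define J where "J = I - {i}"
  have I_eq: "I = insert i J" and J: "finite J" "i \<notin> J"
    using I by (auto simp: J_def)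
  note g_meas[measurable] = borel_measurable_integrable[OF g, unfolded I_eq]
  define h where "h x = (\<integral>z. g (x(i := z)) \<partial>M)" for x
  have h[measurable]: "h \<in> borel_measurable (PiM J (\<lambda>_. M))"
    unfolding h_def by measurable
  have "S(i := z) = (restrict S J)(i := z)" if "S \<in> space (PiM I (\<lambda>_. M))" for S z
    using that by (auto simp: space_PiM PiE_def extensional_def J_def)
  then have "(\<integral>S. (\<integral>z. g (S(i := z)) \<partial>M) \<partial>PiM I (\<lambda>_. M)) = (\<integral>S. h (restrict S J) \<partial>PiM I (\<lambda>_. M))"
    unfolding h_def by (intro Bochner_Integration.integral_cong) auto
  also have "\<dots> = (\<integral>x. h x \<partial>distr (PiM I (\<lambda>_. M)) (PiM J (\<lambda>_. M)) (\<lambda>S. restrict S J))"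
    using J by (intro integral_distr[symmetric] h measurable_restrict_subset) (auto simp: I_eq)
  also have "\<dots> = (\<integral>x. h x \<partial>PiM J (\<lambda>_. M))"
    using I by (simp flip: distr_restrict add: J_def)
  also have "\<dots> = (\<integral>S. g S \<partial>PiM I (\<lambda>_. M))"
    unfolding h_def I_eq using product_integral_insert[OF J, of g] g by (simp add: I_eq)
  finally show ?thesis .
qed

lemma differ_in_one_fun_upd:
  assumes "i < n" "y \<noteq> S i"
  shows "differ_in_one n S (S(i := y))"
proof -
  have "{j \<in> {..<n}. S j \<noteq> (S(i := y)) j} = {i}"
    using assms by auto
  then show ?thesis
    by (simp add: differ_in_one_def)
qed

lemma replace_one_stable_of_SAS:
  fixes lstat :: "(nat \<Rightarrow> 'z) \<Rightarrow> 'z \<Rightarrow> real"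
  assumes SAS: "\<And>S S'. S \<in> A \<Longrightarrow> S' \<in> A \<Longrightarrow> differ_in_one n S S' \<Longrightarrow>
        beta = (SUP z. \<bar>lstat S z - lstat S' z\<bar>)"
    and bounded: "\<And>S z. \<bar>lstat S z\<bar> \<le> L"
    and closed: "\<And>S i y. S \<in> A \<Longrightarrow> i < n \<Longrightarrow> S(i := y) \<in> A"
    and two_points: "(a :: 'z) \<noteq> b"
    and S: "S \<in> A" and i: "i < n"
  shows "\<bar>lstat S z - lstat (S(i := y)) z\<bar> \<le> beta"
proof -
  have changed: "\<bar>lstat S z - lstat (S(i := y)) z\<bar> \<le> beta" if "y \<noteq> S i" for y z
  proof -
    have "\<bar>lstat S z' - lstat (S(i := y)) z'\<bar> \<le> 2 * L" for z'
      using abs_triangle_ineq4[of "lstat S z'"] bounded[of S z'] bounded[of "S(i := y)" z'] by linarith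
    then have "bdd_above (range (\<lambda>z. \<bar>lstat S z - lstat (S(i := y)) z\<bar>))"
      by (intro bdd_aboveI2)
    then show ?thesis
      using SAS[OF S closed[OF S i] differ_in_one_fun_upd[of i n y S, OF i that]]
        cSUP_upper[of z UNIV "\<lambda>z. \<bar>lstat S z - lstat (S(i := y)) z\<bar>"]
      by simp
  qed
  \<comment> \<open>for y = S i the claim is 0 \<le> beta, which needs some sample differing in exactly one point\<close>
  obtain y' where "y' \<noteq> S i"
    using two_points by metis
  then have "0 \<le> beta"
    using changed[of y' z] by linarith
  then show ?thesis
    using changed by (cases "y = S i") auto
qed

lemma McDiarmid_exponent_eq:
  fixes a delta :: real
  assumes "a > 0" "n > 0" "0 < delta" "delta \<le> 2"
  shows "2 * (2 * a * sqrt (ln (2 / delta) / (2 * real n)))\<^sup>2 / (real n * (2 * a / real n)\<^sup>2)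
    = ln (2 / delta)"
  using assms by (simp add: power_mult_distrib power_divide field_simps power2_eq_square)

locale replace_one_stable_statistic = D: prob_space D for D :: "'z measure" +
  fixes n :: nat and lstat :: "(nat \<Rightarrow> 'z) \<Rightarrow> 'z \<Rightarrow> real" and L beta :: real
  assumes n_pos: "0 < n"
    and lstat_nonneg: "\<And>S z. 0 \<le> lstat S z"
    and lstat_le: "\<And>S z. lstat S z \<le> L"
    and lstat_measurable [measurable]:
      "(\<lambda>(S, z). lstat S z) \<in> borel_measurable (sample_law n D \<Otimes>\<^sub>M D)"
    and replace_one_stable: "\<And>S i y z. S \<in> space (sample_law n D) \<Longrightarrow> i < n \<Longrightarrow> y \<in> space D \<Longrightarrow>
      \<bar>lstat S z - lstat (S(i := y)) z\<bar> \<le> beta"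
begin

sublocale P: prob_space "sample_law n D"
  unfolding sample_law_def by (intro prob_space_PiM D.prob_space_axioms)

lemma fun_upd_in_space_sample_law:
  "S \<in> space (sample_law n D) \<Longrightarrow> i < n \<Longrightarrow> y \<in> space D \<Longrightarrow> S(i := y) \<in> space (sample_law n D)"
  by (auto simp: sample_law_def space_PiM PiE_iff extensional_def)

lemma beta_nonneg: "0 \<le> beta"
proof -
  obtain S where S: "S \<in> space (sample_law n D)"
    using P.not_empty by blast
  then have "S 0 \<in> space D"
    using n_pos by (auto simp: sample_law_def space_PiM)
  then show ?thesis
    using replace_one_stable[OF S n_pos, of "S 0" undefined] by simp
qed

lemma lstat_integrable: "S \<in> space (sample_law n D) \<Longrightarrow> integrable D (lstat S)"
  using measurable_Pair2[OF lstat_measurable] lstat_nonneg lstat_le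
  by (intro D.integrable_const_bound[where B=L] AE_I2) auto

lemma lstat_sample_point_measurable [measurable]:
  assumes "i < n"
  shows "(\<lambda>S. lstat S (S i)) \<in> borel_measurable (sample_law n D)"
proof -
  have "(\<lambda>S. (S, S i)) \<in> measurable (sample_law n D) (sample_law n D \<Otimes>\<^sub>M D)"
    using assms unfolding sample_law_def
    by (intro measurable_Pair measurable_ident_sets measurable_component_singleton) auto
  from measurable_compose[OF this lstat_measurable] show ?thesis by simp
qed

lemma lstat_resample_measurable [measurable]:
  assumes "i < n"
  shows "(\<lambda>(S, z). lstat (S(i := z)) z) \<in> borel_measurable (sample_law n D \<Otimes>\<^sub>M D)"
proof -
  have "(\<lambda>(S, z). S(i := z)) \<in> measurable (sample_law n D \<Otimes>\<^sub>M D) (sample_law n D)"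
    using measurable_add_dim[of i "{..<n}" "\<lambda>_. D"] assms
    by (simp add: sample_law_def insert_absorb)
  then have "(\<lambda>(S, z). (S(i := z), z)) \<in> measurable (sample_law n D \<Otimes>\<^sub>M D) (sample_law n D \<Otimes>\<^sub>M D)"
    by measurable
  from measurable_compose[OF this lstat_measurable] show ?thesis
    by (simp add: case_prod_beta)
qed

lemma pop_risk_measurable [measurable]: "pop_risk D lstat \<in> borel_measurable (sample_law n D)"
  unfolding pop_risk_def by measurable

lemma emp_risk_measurable [measurable]: "emp_risk n lstat \<in> borel_measurable (sample_law n D)"
  unfolding emp_risk_def by measurable

lemma pop_risk_bounds: "S \<in> space (sample_law n D) \<Longrightarrow> 0 \<le> pop_risk D lstat S \<and> pop_risk D lstat S \<le> L"
  unfolding pop_risk_def using lstat_nonneg lstat_le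
  by (auto intro!: integral_nonneg_AE D.integral_le_const lstat_integrable)

lemma emp_risk_bounds: "0 \<le> emp_risk n lstat S \<and> emp_risk n lstat S \<le> L"
proof -
  have "(\<Sum>i<n. lstat S (S i)) \<le> real n * L"
    using sum_bounded_above[of "{..<n}" "\<lambda>i. lstat S (S i)" L] lstat_le by simp
  then show ?thesis
    using n_pos lstat_nonneg unfolding emp_risk_def by (auto simp: sum_nonneg field_simps)
qed

lemma pop_risk_replace_one:
  assumes S: "S \<in> space (sample_law n D)" and i: "i < n" and y: "y \<in> space D"
  shows "\<bar>pop_risk D lstat S - pop_risk D lstat (S(i := y))\<bar> \<le> beta"
proof -
  have S': "S(i := y) \<in> space (sample_law n D)"
    using fun_upd_in_space_sample_law[OF assms] .
  have "pop_risk D lstat S - pop_risk D lstat (S(i := y)) = (\<integral>z. lstat S z - lstat (S(i := y)) z \<partial>D)"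
    unfolding pop_risk_def using lstat_integrable[OF S] lstat_integrable[OF S'] by simp
  also have "\<bar>\<dots>\<bar> \<le> beta"
    using replace_one_stable[OF assms] measurable_Pair2[OF lstat_measurable S]
      measurable_Pair2[OF lstat_measurable S']
    by (intro D.abs_integral_le_const) auto
  finally show ?thesis .
qed

lemma emp_risk_replace_one:
  assumes S: "S \<in> space (sample_law n D)" and i: "i < n" and y: "y \<in> space D"
  shows "\<bar>emp_risk n lstat S - emp_risk n lstat (S(i := y))\<bar> \<le> beta + L / real n"
proof -
  let ?S' = "S(i := y)"
  have term_diff: "\<bar>lstat S (S j) - lstat ?S' (?S' j)\<bar> \<le> beta + (if j = i then L else 0)" for j
  proof (cases "j = i")
    case True
    then show ?thesis
      using lstat_nonneg[of S "S j"] lstat_le[of S "S j"] lstat_nonneg[of ?S' y] lstat_le[of ?S' y]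
        beta_nonneg by auto
  next
    case False
    then show ?thesis
      using replace_one_stable[OF assms, of "S j"] by simp
  qed
  have "\<bar>(\<Sum>j<n. lstat S (S j)) - (\<Sum>j<n. lstat ?S' (?S' j))\<bar>
      \<le> (\<Sum>j<n. \<bar>lstat S (S j) - lstat ?S' (?S' j)\<bar>)"
    by (simp only: sum_subtractf[symmetric] sum_abs)
  also have "\<dots> \<le> (\<Sum>j<n. beta + (if j = i then L else 0))"
    by (intro sum_mono term_diff)
  also have "\<dots> = real n * beta + L"
    using i by (simp add: sum.distrib)
  finally show ?thesis
    using n_pos unfolding emp_risk_def
    by (simp add: abs_mult field_simps flip: right_diff_distrib del: fun_upd_apply)
qed

lemma lstat_sample_point_integrable:
  "i < n \<Longrightarrow> integrable (sample_law n D) (\<lambda>S. lstat S (S i))"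
  using lstat_nonneg lstat_le by (intro P.integrable_const_bound[where B=L] AE_I2) auto

lemma pop_risk_integrable: "integrable (sample_law n D) (pop_risk D lstat)"
  using pop_risk_bounds by (intro P.integrable_const_bound[where B=L] AE_I2) auto

lemma emp_risk_integrable: "integrable (sample_law n D) (emp_risk n lstat)"
  using emp_risk_bounds by (intro P.integrable_const_bound[where B=L] AE_I2) auto

lemma pop_risk_le_resampled:
  assumes S: "S \<in> space (sample_law n D)" and i: "i < n"
  shows "pop_risk D lstat S \<le> (\<integral>z. lstat (S(i := z)) z \<partial>D) + beta"
proof -
  have resample_integrable: "integrable D (\<lambda>z. lstat (S(i := z)) z)"
    using measurable_Pair2[OF lstat_resample_measurable[OF i] S] lstat_nonneg lstat_le
    by (intro D.integrable_const_bound[where B=L] AE_I2) auto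
  moreover have "lstat S z \<le> lstat (S(i := z)) z + beta" if "z \<in> space D" for z
    using replace_one_stable[OF S i that, of z] by (simp add: abs_le_iff)
  ultimately have "pop_risk D lstat S \<le> (\<integral>z. lstat (S(i := z)) z + beta \<partial>D)"
    unfolding pop_risk_def using lstat_integrable[OF S] by (intro integral_mono) auto
  then show ?thesis
    using resample_integrable by (simp add: Bochner_Integration.integral_add D.prob_space)
qed

lemma expectation_pop_risk_le_sample_point:
  assumes i: "i < n"
  shows "P.expectation (pop_risk D lstat) \<le> P.expectation (\<lambda>S. lstat S (S i)) + beta"
proof -
  define R where "R S = (\<integral>z. lstat (S(i := z)) z \<partial>D)" for S
  have "R \<in> borel_measurable (sample_law n D)"
    unfolding R_def using lstat_resample_measurable[OF i] by (rule D.borel_measurable_lebesgue_integral)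
  moreover have "\<bar>R S\<bar> \<le> L" if "S \<in> space (sample_law n D)" for S
    unfolding R_def using measurable_Pair2[OF lstat_resample_measurable[OF i] that] lstat_nonneg lstat_le
    by (intro D.abs_integral_le_const) auto
  ultimately have R_integrable: "integrable (sample_law n D) R"
    by (intro P.integrable_const_bound[where B=L] AE_I2) auto
  have "P.expectation (pop_risk D lstat) \<le> P.expectation (\<lambda>S. R S + beta)"
    using pop_risk_integrable R_integrable pop_risk_le_resampled[OF _ i, folded R_def]
    by (intro integral_mono) (auto intro!: Bochner_Integration.integrable_add)
  moreover have "P.expectation R = P.expectation (\<lambda>S. lstat S (S i))"
    using D.integral_PiM_resample[of "{..<n}" i "\<lambda>S. lstat S (S i)"] lstat_sample_point_integrable[OF i] i
    by (simp add: R_def[abs_def] sample_law_def)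
  ultimately show ?thesis
    using R_integrable by (simp add: P.prob_space)
qed

lemma expectation_pop_risk_le:
  "P.expectation (pop_risk D lstat) \<le> P.expectation (emp_risk n lstat) + beta"
proof -
  have "P.expectation (pop_risk D lstat) = (\<Sum>i<n. P.expectation (pop_risk D lstat)) / real n"
    using n_pos by simp
  also have "\<dots> \<le> (\<Sum>i<n. P.expectation (\<lambda>S. lstat S (S i)) + beta) / real n"
    by (intro divide_right_mono sum_mono expectation_pop_risk_le_sample_point) auto
  also have "\<dots> = P.expectation (emp_risk n lstat) + beta"
    using n_pos lstat_sample_point_integrable
    by (simp add: emp_risk_def[abs_def] sum.distrib Bochner_Integration.integral_sum field_simps)
  finally show ?thesis .
qed

definition generalization_gap :: "(nat \<Rightarrow> 'z) \<Rightarrow> real" where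
  "generalization_gap S = pop_risk D lstat S - emp_risk n lstat S"

lemma generalization_gap_measurable [measurable]:
  "generalization_gap \<in> borel_measurable (sample_law n D)"
  unfolding generalization_gap_def[abs_def] by measurable

lemma expectation_generalization_gap_le: "P.expectation generalization_gap \<le> beta"
  using expectation_pop_risk_le pop_risk_integrable emp_risk_integrable
  unfolding generalization_gap_def[abs_def] by simp

lemma generalization_gap_tail:
  assumes eps: "eps \<ge> 0" and c: "2 * beta + L / real n \<le> c"
  shows "measure (sample_law n D)
      {S \<in> space (sample_law n D). P.expectation generalization_gap + eps \<le> generalization_gap S}
    \<le> exp (-2 * eps\<^sup>2 / (real n * c\<^sup>2))"
proof -
  have "\<bar>generalization_gap S\<bar> \<le> L" if "S \<in> space (sample_law n D)" for S
    using pop_risk_bounds[OF that] emp_risk_bounds[of S] unfolding generalization_gap_def by auto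
  moreover have "\<bar>generalization_gap S - generalization_gap (S(i := y))\<bar> \<le> c"
    if "S \<in> space (sample_law n D)" "i < n" "y \<in> space D" for S i y
    using pop_risk_replace_one[OF that] emp_risk_replace_one[OF that] c
    unfolding generalization_gap_def by linarith
  ultimately show ?thesis
    using D.McDiarmid_inequality[OF eps, of generalization_gap n L c] generalization_gap_measurable
    unfolding sample_law_def by blast
qed

lemma generalization_gap_tail_half_delta:
  assumes delta: "0 < delta" "delta < 1" and a: "real n * beta + L > 0"
  shows "measure (sample_law n D)
      {S \<in> space (sample_law n D). P.expectation generalization_gap
         + 2 * (real n * beta + L) * sqrt (ln (2 / delta) / (2 * real n)) \<le> generalization_gap S}
    \<le> delta / 2"
proof -
  define eps where "eps = 2 * (real n * beta + L) * sqrt (ln (2 / delta) / (2 * real n))"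
  have eps: "0 \<le> eps"
    unfolding eps_def using a delta by simp
  \<comment> \<open>with the paper's difference constant 2 (n beta + L) / n the exponent is exactly ln (2 / delta)\<close>
  have c: "2 * beta + L / real n \<le> 2 * (real n * beta + L) / real n"
    using n_pos lstat_nonneg[of undefined undefined] lstat_le[of undefined undefined]
    by (simp add: field_simps)
  have "measure (sample_law n D)
      {S \<in> space (sample_law n D). P.expectation generalization_gap + eps \<le> generalization_gap S}
    \<le> exp (-2 * eps\<^sup>2 / (real n * (2 * (real n * beta + L) / real n)\<^sup>2))"
    by (rule generalization_gap_tail[OF eps c])
  also have "\<dots> = delta / 2"
    using McDiarmid_exponent_eq[OF a n_pos, of delta] delta unfolding eps_def by (simp add: exp_minus)
  finally show ?thesis
    unfolding eps_def .
qed

theorem generalization_bound: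
  assumes delta: "0 < delta" "delta < 1"
  shows "measure (sample_law n D)
           {S \<in> space (sample_law n D).
              pop_risk D lstat S \<le> emp_risk n lstat S + beta
                + 2 * (real n * beta + L) * sqrt (ln (2 / delta) / (2 * real n))}
         > 1 - delta"
proof -
  let ?P = "sample_law n D"
  define eps where "eps = 2 * (real n * beta + L) * sqrt (ln (2 / delta) / (2 * real n))"
  define Good where "Good = {S \<in> space ?P. pop_risk D lstat S \<le> emp_risk n lstat S + beta + eps}"
  have L_nonneg: "0 \<le> L"
    using lstat_nonneg lstat_le order_trans by blast
  have eps_nonneg: "0 \<le> eps"
    unfolding eps_def using delta L_nonneg beta_nonneg by simp
  have "measure ?P Good > 1 - delta"
  proof (cases "real n * beta + L = 0")
    case True
    then have "L = 0"
      using L_nonneg beta_nonneg by (simp add: add_nonneg_eq_0_iff)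
    then have "Good = space ?P"
      using pop_risk_bounds emp_risk_bounds[THEN conjunct1] beta_nonneg eps_nonneg
      unfolding Good_def by fastforce
    then show ?thesis
      using delta by (simp add: P.prob_space)
  next
    case False
    then have "real n * beta + L > 0"
      using L_nonneg mult_nonneg_nonneg[OF of_nat_0_le_iff[of n] beta_nonneg] by linarith
    define Bad where "Bad = {S \<in> space ?P. P.expectation generalization_gap + eps \<le> generalization_gap S}"
    have "measure ?P Bad \<le> delta / 2"
      unfolding Bad_def eps_def by (rule generalization_gap_tail_half_delta) fact+
    moreover have "space ?P - Good \<subseteq> Bad"
      using expectation_generalization_gap_le unfolding Good_def Bad_def generalization_gap_def by auto
    then have "1 - measure ?P Good \<le> measure ?P Bad"
      unfolding Bad_def Good_def by (subst P.prob_compl[symmetric]) (auto intro!: P.finite_measure_mono)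
    ultimately show ?thesis
      using delta by linarith
  qed
  then show ?thesis
    unfolding Good_def eps_def by (simp add: add.assoc)
qed

end

lemma replace_one_stable_statistic_of_SAS:
  fixes lstat :: "(nat \<Rightarrow> 'z) \<Rightarrow> 'z \<Rightarrow> real"
  assumes D: "prob_space D" "space D = UNIV" and n: "0 < n"
    and bounds: "\<And>S z. 0 \<le> lstat S z \<and> lstat S z \<le> L"
    and measurable: "(\<lambda>(S, z). lstat S z) \<in> borel_measurable (sample_law n D \<Otimes>\<^sub>M D)"
    and SAS: "\<And>S S'. S \<in> space (sample_law n D) \<Longrightarrow> S' \<in> space (sample_law n D) \<Longrightarrow>
        differ_in_one n S S' \<Longrightarrow> beta = (SUP z. \<bar>lstat S z - lstat S' z\<bar>)"
    and two_points: "(a :: 'z) \<noteq> b"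
  shows "replace_one_stable_statistic D n lstat L beta"
proof -
  have "\<bar>lstat S z - lstat (S(i := y)) z\<bar> \<le> beta"
    if "S \<in> space (sample_law n D)" "i < n" for S i y z
  proof (rule replace_one_stable_of_SAS[where A="space (sample_law n D)" and L=L])
    show "beta = (SUP z. \<bar>lstat S z - lstat S' z\<bar>)"
      if "S \<in> space (sample_law n D)" "S' \<in> space (sample_law n D)" "differ_in_one n S S'" for S S'
      using that by (rule SAS)
    show "\<bar>lstat S z\<bar> \<le> L" for S z
      using bounds[of S z] by simp
    show "S(i := y) \<in> space (sample_law n D)" if "S \<in> space (sample_law n D)" "i < n" for S i y
      using that D(2) by (auto simp: sample_law_def space_PiM PiE_iff extensional_def)
  qed (fact two_points that)+
  then show ?thesis
    using n bounds measurable
    by (intro replace_one_stable_statistic.intro[OF D(1)] replace_one_stable_statistic_axioms.intro)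
       simp_all
qed

theorem theorem1:
  fixes D :: "((real ^ 'd::finite) \<times> real) measure"
    and loss :: "(real ^ 'd) \<times> real \<Rightarrow> 'w::euclidean_space \<Rightarrow> real"
    and grad :: "(real ^ 'd) \<times> real \<Rightarrow> 'w \<Rightarrow> 'w"
    and lstat :: "(nat \<Rightarrow> (real ^ 'd) \<times> real) \<Rightarrow> (real ^ 'd) \<times> real \<Rightarrow> real"
    and n m :: nat and eta beta L delta :: real
  assumes D: "prob_space D" "sets D = sets borel"
    and nm: "1 \<le> n" "1 \<le> m" "m \<le> n"
    and eta: "eta > 0"
    and loss_nonneg: "\<And>z w. loss z w \<ge> 0"
    and loss_bdd: "bdd_above (range (\<lambda>(z, w). \<bar>loss z w\<bar>))"
    and L_def: "L = (SUP (z, w). \<bar>loss z w\<bar>)"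
    and grad: "\<And>z w. GDERIV (loss z) w :> grad z w"
    and ergodic: "\<And>S. AE w0 in lborel. AE xi in batch_law n m. \<forall>z.
           (\<lambda>T. (\<Sum>t<T. loss z (sgd_orbit grad eta m S xi w0 t)) / real T)
             \<longlonglongrightarrow> lstat S z"
    and lstat_meas: "(\<lambda>(S, z). lstat S z) \<in> borel_measurable (sample_law n D \<Otimes>\<^sub>M D)"
    and SAS: "\<And>S S'. S \<in> space (sample_law n D) \<Longrightarrow> S' \<in> space (sample_law n D) \<Longrightarrow>
           differ_in_one n S S' \<Longrightarrow> beta = (SUP z. \<bar>lstat S z - lstat S' z\<bar>)"
    and delta: "0 < delta" "delta < 1"
  shows "measure (sample_law n D)
           {S \<in> space (sample_law n D).
              pop_risk D lstat S \<le> emp_risk n lstat S + beta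
                + 2 * (real n * beta + L) * sqrt (ln (2 / delta) / (2 * real n))}
         > 1 - delta"
proof -
  have loss_le: "loss z w \<le> L" for z w
    unfolding L_def using cSUP_upper[OF _ loss_bdd, of "(z, w)"] by simp
  have batches: "prob_space (batch_law n m)"
    unfolding batch_law_def by (intro prob_space_PiM prob_space_measure_pmf)
  have lstat_bounds: "0 \<le> lstat S z \<and> lstat S z \<le> L" for S z
    by (rule ergodic_average_limit_bounds[OF ergodic[of S]])
       (auto simp: prob_space.emeasure_space_1[OF batches] loss_nonneg loss_le)
  have "replace_one_stable_statistic D n lstat L beta"
    using D sets_eq_imp_space_eq[OF D(2)] nm(1) lstat_bounds lstat_meas SAS
    by (intro replace_one_stable_statistic_of_SAS[where a="(0, 0)" and b="(0, 1)"]) auto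
  then show ?thesis
    using replace_one_stable_statistic.generalization_bound[OF _ delta] by blast
qed

end
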